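(* Let $\alpha$ be a unit-speed curve in $\mathbb{R}^3$ with arc length $s$, nonzero curvature $\kappa$ and torsion $\tau$. Let $\alpha_T$ be its tangent indicatrix, and let $\beta$ be a Bertrand-direction curve of $\alpha_T$ with constant angle $\theta$ (so $X=\cos\theta\,T_T+\sin\theta\,B_T$). Then, at corresponding parameter values, $$\frac{-\sin\theta+(\tau_\beta/\kappa_\beta)\cos\theta}{\cos\theta+(\tau_\beta/\kappa_\beta)\sin\theta}=\frac{\kappa^2}{(\kappa^2+\tau^2)^{3/2}}\Big(\frac{\tau}{\kappa}\Big)',$$ where $'=d/ds$.
   Context: Let $\alpha:I\subset\mathbb{R}\to\mathbb{R}^3$ be a unit-speed curve with arc length $s$, curvature $\kappa>0$, torsion $\tau$ and Frenet frame $\{T,N,B\}$. Put $f=\tau/\kappa$ and $\sigma=\frac{\kappa^2}{(\kappa^2+\tau^2)^{3/2}}(\tau/\kappa)'$. The tangent indicatrix of $\alpha$ is the curve $\alpha_T=T$ on the unit sphere. Its arc length is $s_T=\int\kappa\,ds$, so parameters $s$ and $s_T(s)$ correspond. Its Frenet apparatus is $\{T_T,N_T,B_T,\kappa_T,\tau_T\}$, with $\frac{dT_T}{ds_T}=\kappa_TN_T$, $\frac{dN_T}{ds_T}=-\kappa_TT_T+\tau_TB_T$ and $\frac{dB_T}{ds_T}=-\tau_TN_T$. It is known that $\kappa_T=\sqrt{1+f^2}$ and $\tau_T=\sigma\sqrt{1+f^2}$. Let $x,y,z$ be real functions of $s_T$ with $x^2+y^2+z^2=1$, and set $X=xT_T+yN_T+zB_T$.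 An integral curve $\beta$ of $X$, meaning $d\beta/ds_T=X$, is an $X$-direction curve of $\alpha_T$. It is regarded as a unit-speed Frenet curve with frame $\{T_\beta=X,N_\beta,B_\beta\}$, curvature $\kappa_\beta>0$ and torsion $\tau_\beta$. $\beta$ is a Bertrand-direction curve of $\alpha_T$ if $N_\beta=N_T$; then $X=\cos\theta\,T_T+\sin\theta\,B_T$ for a constant $\theta$. *)

theory Defs
  imports "HOL-Analysis.Analysis"
begin

definition frenet_apparatus ::
  "real set \<Rightarrow> (real \<Rightarrow> real^3) \<Rightarrow> (real \<Rightarrow> real^3) \<Rightarrow> (real \<Rightarrow> real^3) \<Rightarrow> (real \<Rightarrow> real^3)
    \<Rightarrow> (real \<Rightarrow> real) \<Rightarrow> (real \<Rightarrow> real) \<Rightarrow> bool" where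
  "frenet_apparatus I c T N B k t \<longleftrightarrow>
     open I \<and> is_interval I \<and> I \<noteq> {} \<and>
     (\<forall>s\<in>I. (c has_vector_derivative T s) (at s)
        \<and> norm (T s) = 1 \<and> norm (N s) = 1 \<and> T s \<bullet> N s = 0
        \<and> B s = cross3 (T s) (N s)
        \<and> k s > 0
        \<and> (T has_vector_derivative (k s *\<^sub>R N s)) (at s)
        \<and> (N has_vector_derivative (- (k s *\<^sub>R T s) + t s *\<^sub>R B s)) (at s)
        \<and> (B has_vector_derivative (- (t s *\<^sub>R N s))) (at s))"

end

theory Submission
  imports Defs
begin

text \<open>The tangent indicatrix moves with speed \<open>\<kappa>\<close> in the direction \<open>N\<close>, so its Frenet frame
  is \<open>T\<^sub>T = N\<close>, \<open>N\<^sub>T = (-\<kappa> T + \<tau> B)/\<surd>(\<kappa>\<^sup>2+\<tau>\<^sup>2)\<close>, \<open>B\<^sub>T = (\<kappa> B + \<tau> T)/\<surd>(\<kappa>\<^sup>2+\<tau>\<^sup>2)\<close>,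
  and differentiating these frame vectors gives \<open>\<tau>\<^sub>T/\<kappa>\<^sub>T = \<kappa>\<^sup>2/(\<kappa>\<^sup>2+\<tau>\<^sup>2)\<^sup>3\<^sup>/\<^sup>2 (\<tau>/\<kappa>)'\<close>.
  A Bertrand-direction curve shares the principal normal \<open>N\<^sub>T\<close>, so its frame \<open>(T\<^sub>\<beta>, B\<^sub>\<beta>)\<close> is
  \<open>(T\<^sub>T, B\<^sub>T)\<close> rotated by the constant angle \<open>\<theta>\<close>; hence \<open>(\<kappa>\<^sub>\<beta>, \<tau>\<^sub>\<beta>)\<close> is \<open>(\<kappa>\<^sub>T, \<tau>\<^sub>T)\<close> rotated
  by \<open>\<theta>\<close>, and rotating back expresses \<open>\<tau>\<^sub>T/\<kappa>\<^sub>T\<close> through \<open>\<tau>\<^sub>\<beta>/\<kappa>\<^sub>\<beta>\<close> and \<open>\<theta>\<close>.\<close>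

lemma cross3_orthonormal_frame:
  fixes T N B :: "real^3"
  assumes "norm T = 1" "norm N = 1" "T \<bullet> N = 0" "B = cross3 T N"
  shows "T \<bullet> T = 1" "N \<bullet> N = 1" "B \<bullet> B = 1"
    "T \<bullet> B = 0" "N \<bullet> B = 0"
    "cross3 N B = T" "cross3 B N = - T" "cross3 N T = - B"
proof -
  have cross_cross_right: "cross3 a (cross3 b c) = (a \<bullet> c) *\<^sub>R b - (a \<bullet> b) *\<^sub>R c"
    for a b c :: "real^3"
    unfolding vec_eq_iff forall_3 by (simp add: cross3_simps)
  show unit: "T \<bullet> T = 1" "N \<bullet> N = 1"
    using assms by (simp_all add: dot_square_norm)
  show "B \<bullet> B = 1"
    using norm_cross_dot[of T N] assms by (simp add: power2_norm_eq_inner)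
  show "T \<bullet> B = 0" "N \<bullet> B = 0"
    using assms dot_cross_self by auto
  show "cross3 N B = T" "cross3 B N = - T"
    using assms unit cross_cross_right[of N T N] cross_skew[of B N] by (simp_all add: inner_commute)
  show "cross3 N T = - B"
    using assms by (metis cross_skew)
qed

lemma frenet_apparatusD:
  assumes "frenet_apparatus I c T N B k t" and "s \<in> I"
  shows "open I" "(c has_vector_derivative T s) (at s)"
    "norm (T s) = 1" "norm (N s) = 1" "T s \<bullet> N s = 0" "B s = cross3 (T s) (N s)" "k s > 0"
    "(T has_vector_derivative (k s *\<^sub>R N s)) (at s)"
    "(N has_vector_derivative (- (k s *\<^sub>R T s) + t s *\<^sub>R B s)) (at s)"
    "(B has_vector_derivative (- (t s *\<^sub>R N s))) (at s)"
  using assms unfolding frenet_apparatus_def by auto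

lemma frenet_apparatus_frame:
  assumes "frenet_apparatus I c T N B k t" and "s \<in> I"
  shows "T s \<bullet> T s = 1" "N s \<bullet> N s = 1" "B s \<bullet> B s = 1"
    "T s \<bullet> N s = 0" "T s \<bullet> B s = 0" "N s \<bullet> B s = 0"
    "cross3 (N s) (B s) = T s" "cross3 (B s) (N s) = - T s" "cross3 (N s) (T s) = - B s"
  using cross3_orthonormal_frame[OF frenet_apparatusD(3-6)[OF assms]] frenet_apparatusD(5)[OF assms]
  by simp_all

lemma has_vector_derivative_unique_on_open:
  assumes "open S" "a \<in> S" "\<forall>x\<in>S. F x = G x"
    and "(F has_vector_derivative F') (at a)" "(G has_vector_derivative G') (at a)"
  shows "F' = G'"
proof -
  have "(F has_vector_derivative G') (at a)"
    using assms(5) by (rule has_vector_derivative_transform_within_open[OF _ assms(1,2)])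
      (use assms(3) in simp)
  with assms(4) show ?thesis
    using vector_derivative_unique_at by blast
qed

lemma has_vector_derivative_reparametrization_unique:
  assumes "open I" "y \<in> I" "\<forall>x\<in>I. F x = G (\<phi> x)"
    and "(\<phi> has_real_derivative \<phi>') (at y)" "(G has_vector_derivative G') (at (\<phi> y))"
    and "(F has_vector_derivative F') (at y)"
  shows "F' = \<phi>' *\<^sub>R G'"
proof -
  have "((G \<circ> \<phi>) has_vector_derivative \<phi>' *\<^sub>R G') (at y)"
    using assms(4,5) by (intro vector_diff_chain_at)
      (simp_all add: has_real_derivative_iff_has_vector_derivative)
  with assms show ?thesis
    by (intro has_vector_derivative_unique_on_open) auto
qed

locale tangent_indicatrix =
  fixes I :: "real set"
    and \<alpha> T N B :: "real \<Rightarrow> real^3" and \<kappa> \<tau> :: "real \<Rightarrow> real"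
    and sT :: "real \<Rightarrow> real"
    and \<alpha>T TT NT BT :: "real \<Rightarrow> real^3" and \<kappa>T \<tau>T :: "real \<Rightarrow> real"
  assumes curve: "frenet_apparatus I \<alpha> T N B \<kappa> \<tau>"
    and arclength: "\<forall>s\<in>I. (sT has_real_derivative \<kappa> s) (at s)"
    and indicatrix: "\<forall>s\<in>I. \<alpha>T (sT s) = T s"
    and indicatrix_curve: "frenet_apparatus (sT ` I) \<alpha>T TT NT BT \<kappa>T \<tau>T"
begin

lemma indicatrix_tangent:
  assumes "s \<in> I"
  shows "TT (sT s) = N s"
proof -
  have "\<kappa> s *\<^sub>R N s = \<kappa> s *\<^sub>R TT (sT s)"
    using assms arclength indicatrix
    by (intro has_vector_derivative_reparametrization_unique[where F = T and G = \<alpha>T])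
      (auto intro: frenet_apparatusD[OF curve] frenet_apparatusD[OF indicatrix_curve])
  then show ?thesis
    using frenet_apparatusD(7)[OF curve assms] by simp
qed

lemma indicatrix_curvature_normal:
  assumes "s \<in> I"
  shows "\<kappa>T (sT s) = sqrt (\<kappa> s ^ 2 + \<tau> s ^ 2) / \<kappa> s"
    and "NT (sT s) = (1 / sqrt (\<kappa> s ^ 2 + \<tau> s ^ 2)) *\<^sub>R (- (\<kappa> s *\<^sub>R T s) + \<tau> s *\<^sub>R B s)"
proof -
  let ?V = "- (\<kappa> s *\<^sub>R T s) + \<tau> s *\<^sub>R B s"
  have sT: "sT s \<in> sT ` I"
    using assms by simp
  have "?V = \<kappa> s *\<^sub>R (\<kappa>T (sT s) *\<^sub>R NT (sT s))"
    using assms arclength indicatrix_tangent frenet_apparatusD(8)[OF indicatrix_curve sT]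
    by (intro has_vector_derivative_reparametrization_unique[OF frenet_apparatusD(1)[OF curve assms]
          _ _ _ _ frenet_apparatusD(9)[OF curve assms]])
      auto
  then have V: "?V = (\<kappa> s * \<kappa>T (sT s)) *\<^sub>R NT (sT s)"
    by simp
  have "norm ?V = sqrt (\<kappa> s ^ 2 + \<tau> s ^ 2)"
    using frenet_apparatus_frame[OF curve assms]
    by (simp add: norm_eq_sqrt_inner inner_diff_left inner_diff_right inner_commute power2_eq_square)
  moreover have "norm ((\<kappa> s * \<kappa>T (sT s)) *\<^sub>R NT (sT s)) = \<kappa> s * \<kappa>T (sT s)"
    using frenet_apparatusD[OF curve assms] frenet_apparatusD[OF indicatrix_curve sT] by simp
  ultimately have speed: "\<kappa> s * \<kappa>T (sT s) = sqrt (\<kappa> s ^ 2 + \<tau> s ^ 2)"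
    using V by simp
  then show "\<kappa>T (sT s) = sqrt (\<kappa> s ^ 2 + \<tau> s ^ 2) / \<kappa> s"
    using frenet_apparatusD(7)[OF curve assms] by (simp add: field_simps)
  show "NT (sT s) = (1 / sqrt (\<kappa> s ^ 2 + \<tau> s ^ 2)) *\<^sub>R ?V"
    using V speed frenet_apparatusD(7)[OF curve assms] frenet_apparatusD(7)[OF indicatrix_curve sT]
    by simp
qed

lemma indicatrix_binormal:
  assumes "s \<in> I"
  shows "BT (sT s) = (1 / sqrt (\<kappa> s ^ 2 + \<tau> s ^ 2)) *\<^sub>R (\<kappa> s *\<^sub>R B s + \<tau> s *\<^sub>R T s)"
proof -
  have "BT (sT s) = cross3 (TT (sT s)) (NT (sT s))"
    using assms frenet_apparatusD(6)[OF indicatrix_curve] by simp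
  also have "\<dots> = (1 / sqrt (\<kappa> s ^ 2 + \<tau> s ^ 2)) *\<^sub>R (\<kappa> s *\<^sub>R B s + \<tau> s *\<^sub>R T s)"
    using frenet_apparatus_frame[OF curve assms]
    by (simp add: indicatrix_tangent indicatrix_curvature_normal assms
        cross_mult_right cross_add_right Cross3.right_diff_distrib)
  finally show ?thesis .
qed

lemma indicatrix_torsion_eq:
  assumes s: "s \<in> I"
    and k': "(\<kappa> has_real_derivative k') (at s)" and t': "(\<tau> has_real_derivative t') (at s)"
  shows "(\<kappa> s ^ 2 + \<tau> s ^ 2) * \<kappa> s * \<tau>T (sT s) = t' * \<kappa> s - k' * \<tau> s"
proof -
  define h where "h r = sqrt (\<kappa> r ^ 2 + \<tau> r ^ 2)" for r
  have sT: "sT s \<in> sT ` I"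
    using s by simp
  have h_pos: "h r > 0" if "r \<in> I" for r
    using frenet_apparatusD(7)[OF curve that] by (simp add: h_def add_pos_nonneg)
  have "\<exists>h'. (h has_real_derivative h') (at s)"
    unfolding h_def[abs_def] using h_pos[OF s]
    by (intro exI) (auto simp: h_def intro!: derivative_eq_intros k' t')
  then obtain h' where h': "(h has_real_derivative h') (at s)"
    by blast
  let ?NT = "NT (sT s)"
  txt \<open>Differentiate \<open>\<kappa> B + \<tau> T = h B\<^sub>T \<circ> sT\<close>; the unknown \<open>h'\<close> disappears in the
    \<open>N\<^sub>T\<close>-component because \<open>B\<^sub>T \<bottom> N\<^sub>T\<close>.\<close>
  have "(\<kappa> s *\<^sub>R (- (\<tau> s *\<^sub>R N s)) + k' *\<^sub>R B s) + (\<tau> s *\<^sub>R (\<kappa> s *\<^sub>R N s) + t' *\<^sub>R T s)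
      = h s *\<^sub>R (\<kappa> s *\<^sub>R (- (\<tau>T (sT s) *\<^sub>R ?NT))) + h' *\<^sub>R BT (sT s)"
  proof (rule has_vector_derivative_unique_on_open[OF frenet_apparatusD(1)[OF curve s] s])
    show "\<forall>r\<in>I. \<kappa> r *\<^sub>R B r + \<tau> r *\<^sub>R T r = h r *\<^sub>R (BT \<circ> sT) r"
      using h_pos by (simp add: indicatrix_binormal h_def)
    show "((\<lambda>r. \<kappa> r *\<^sub>R B r + \<tau> r *\<^sub>R T r) has_vector_derivative
        (\<kappa> s *\<^sub>R (- (\<tau> s *\<^sub>R N s)) + k' *\<^sub>R B s) + (\<tau> s *\<^sub>R (\<kappa> s *\<^sub>R N s) + t' *\<^sub>R T s)) (at s)"
      using frenet_apparatusD[OF curve s]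
      by (intro has_vector_derivative_add has_vector_derivative_scaleR k' t') auto
    have BT_deriv: "((BT \<circ> sT) has_vector_derivative \<kappa> s *\<^sub>R (- (\<tau>T (sT s) *\<^sub>R ?NT))) (at s)"
      using arclength s frenet_apparatusD(10)[OF indicatrix_curve sT]
      by (intro vector_diff_chain_at) (simp_all add: has_real_derivative_iff_has_vector_derivative)
    show "((\<lambda>r. h r *\<^sub>R (BT \<circ> sT) r) has_vector_derivative
        h s *\<^sub>R (\<kappa> s *\<^sub>R (- (\<tau>T (sT s) *\<^sub>R ?NT))) + h' *\<^sub>R BT (sT s)) (at s)"
      using has_vector_derivative_scaleR[OF h' BT_deriv] by (simp only: comp_apply)
  qed
  from arg_cong[OF this, of "\<lambda>v. v \<bullet> ?NT"]
  have "k' * (B s \<bullet> ?NT) + t' * (T s \<bullet> ?NT) = - (h s * \<kappa> s * \<tau>T (sT s))"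
    using frenet_apparatus_frame[OF indicatrix_curve sT]
    by (simp add: inner_add_left inner_commute algebra_simps)
  moreover have "B s \<bullet> ?NT = \<tau> s / h s" "T s \<bullet> ?NT = - \<kappa> s / h s"
    using frenet_apparatus_frame[OF curve s]
    by (simp_all add: indicatrix_curvature_normal s h_def inner_diff_right inner_commute)
  ultimately have "k' * (\<tau> s / h s) + t' * (- \<kappa> s / h s) = - (h s * \<kappa> s * \<tau>T (sT s))"
    by simp
  then have "h s ^ 2 * \<kappa> s * \<tau>T (sT s) = t' * \<kappa> s - k' * \<tau> s"
    using h_pos[OF s] by (simp add: field_simps power2_eq_square)
  moreover have "h s ^ 2 = \<kappa> s ^ 2 + \<tau> s ^ 2"
    using h_pos[OF s] by (simp add: h_def)
  ultimately show ?thesis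
    by simp
qed

lemma indicatrix_torsion:
  assumes s: "s \<in> I" and "\<kappa> differentiable (at s)" and "\<tau> differentiable (at s)"
  shows "\<tau>T (sT s) = \<kappa> s * deriv (\<lambda>r. \<tau> r / \<kappa> r) s / (\<kappa> s ^ 2 + \<tau> s ^ 2)"
proof -
  obtain k' t' where k': "(\<kappa> has_real_derivative k') (at s)"
    and t': "(\<tau> has_real_derivative t') (at s)"
    using assms(2,3) by (auto simp: real_differentiable_def)
  have \<kappa>_pos: "\<kappa> s > 0"
    using frenet_apparatusD(7)[OF curve s] .
  define D where "D = \<kappa> s ^ 2 + \<tau> s ^ 2"
  have "D > 0"
    using \<kappa>_pos by (simp add: D_def add_pos_nonneg)
  then have torsion: "\<tau>T (sT s) = (t' * \<kappa> s - k' * \<tau> s) / (D * \<kappa> s)"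
    using \<kappa>_pos indicatrix_torsion_eq[OF s k' t'] by (simp add: D_def eq_divide_eq mult.commute)
  have quotient_deriv: "deriv (\<lambda>r. \<tau> r / \<kappa> r) s = (t' * \<kappa> s - \<tau> s * k') / (\<kappa> s * \<kappa> s)"
    using k' t' \<kappa>_pos by (intro DERIV_imp_deriv) (auto intro!: derivative_eq_intros)
  show ?thesis
    unfolding torsion quotient_deriv D_def[symmetric] using \<open>D > 0\<close> \<kappa>_pos
    by (simp add: field_simps)
qed

lemma indicatrix_torsion_curvature_ratio:
  assumes "s \<in> I" and "\<kappa> differentiable (at s)" and "\<tau> differentiable (at s)"
  shows "\<tau>T (sT s) / \<kappa>T (sT s)
    = \<kappa> s ^ 2 / (\<kappa> s ^ 2 + \<tau> s ^ 2) powr (3/2) * deriv (\<lambda>r. \<tau> r / \<kappa> r) s"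
proof -
  have \<kappa>_pos: "\<kappa> s > 0"
    using frenet_apparatusD(7)[OF curve assms(1)] .
  then have pos: "\<kappa> s ^ 2 + \<tau> s ^ 2 > 0"
    by (simp add: add_pos_nonneg)
  have "(\<kappa> s ^ 2 + \<tau> s ^ 2) powr (3/2) = (\<kappa> s ^ 2 + \<tau> s ^ 2) * sqrt (\<kappa> s ^ 2 + \<tau> s ^ 2)"
    using pos powr_add[of "\<kappa> s ^ 2 + \<tau> s ^ 2" 1 "1/2"] by (simp add: powr_half_sqrt)
  then show ?thesis
    using pos \<kappa>_pos
    by (simp add: indicatrix_torsion[OF assms] indicatrix_curvature_normal[OF assms(1)]
        field_simps power2_eq_square)
qed

end

lemma bertrand_direction_curvature_torsion:
  assumes curve: "frenet_apparatus S \<gamma> T N B \<kappa> \<tau>"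
    and direction_curve: "frenet_apparatus S \<beta> T\<beta> N\<beta> B\<beta> \<kappa>\<beta> \<tau>\<beta>"
    and tangent: "\<forall>u\<in>S. T\<beta> u = cos \<theta> *\<^sub>R T u + sin \<theta> *\<^sub>R B u"
    and normal: "\<forall>u\<in>S. N\<beta> u = N u"
    and u: "u \<in> S"
  shows "\<kappa>\<beta> u = cos \<theta> * \<kappa> u - sin \<theta> * \<tau> u"
    and "\<tau>\<beta> u = sin \<theta> * \<kappa> u + cos \<theta> * \<tau> u"
proof -
  note S_open = frenet_apparatusD(1)[OF curve u]
  note scaleR_deriv = bounded_linear.has_vector_derivative[OF bounded_linear_scaleR_right]
  note frame = frenet_apparatus_frame[OF curve u]
  have tangent_deriv: "((\<lambda>v. cos \<theta> *\<^sub>R T v + sin \<theta> *\<^sub>R B v) has_vector_derivative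
      cos \<theta> *\<^sub>R (\<kappa> u *\<^sub>R N u) + sin \<theta> *\<^sub>R (- (\<tau> u *\<^sub>R N u))) (at u)"
    using frenet_apparatusD(8,10)[OF curve u] by (intro has_vector_derivative_add scaleR_deriv)
  have "\<kappa>\<beta> u *\<^sub>R N\<beta> u = cos \<theta> *\<^sub>R (\<kappa> u *\<^sub>R N u) + sin \<theta> *\<^sub>R (- (\<tau> u *\<^sub>R N u))"
    by (rule has_vector_derivative_unique_on_open
        [OF S_open u _ frenet_apparatusD(8)[OF direction_curve u] tangent_deriv])
      (use tangent in simp)
  from arg_cong[OF this, of "\<lambda>v. v \<bullet> N u"]
  show "\<kappa>\<beta> u = cos \<theta> * \<kappa> u - sin \<theta> * \<tau> u"
    using frame normal u by (simp add: inner_diff_left)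
  have binormal: "\<forall>v\<in>S. B\<beta> v = cos \<theta> *\<^sub>R B v - sin \<theta> *\<^sub>R T v"
    using frenet_apparatusD(6)[OF direction_curve] frenet_apparatusD(6)[OF curve]
      frenet_apparatus_frame(8)[OF curve] tangent normal
    by (simp add: cross_add_left cross_mult_left)
  have binormal_deriv: "((\<lambda>v. cos \<theta> *\<^sub>R B v - sin \<theta> *\<^sub>R T v) has_vector_derivative
      cos \<theta> *\<^sub>R (- (\<tau> u *\<^sub>R N u)) - sin \<theta> *\<^sub>R (\<kappa> u *\<^sub>R N u)) (at u)"
    using frenet_apparatusD(8,10)[OF curve u] by (intro has_vector_derivative_diff scaleR_deriv)
  have "- (\<tau>\<beta> u *\<^sub>R N\<beta> u) = cos \<theta> *\<^sub>R (- (\<tau> u *\<^sub>R N u)) - sin \<theta> *\<^sub>R (\<kappa> u *\<^sub>R N u)"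
    by (rule has_vector_derivative_unique_on_open
        [OF S_open u _ frenet_apparatusD(10)[OF direction_curve u] binormal_deriv])
      (use binormal in simp)
  from arg_cong[OF this, of "\<lambda>v. v \<bullet> N u"]
  show "\<tau>\<beta> u = sin \<theta> * \<kappa> u + cos \<theta> * \<tau> u"
    using frame normal u by (simp add: inner_diff_left algebra_simps)
qed

lemma bertrand_direction_torsion_ratio:
  assumes curve: "frenet_apparatus S \<gamma> T N B \<kappa> \<tau>"
    and direction_curve: "frenet_apparatus S \<beta> T\<beta> N\<beta> B\<beta> \<kappa>\<beta> \<tau>\<beta>"
    and "\<forall>u\<in>S. T\<beta> u = cos \<theta> *\<^sub>R T u + sin \<theta> *\<^sub>R B u"
    and "\<forall>u\<in>S. N\<beta> u = N u"
    and u: "u \<in> S"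
  shows "(- sin \<theta> + (\<tau>\<beta> u / \<kappa>\<beta> u) * cos \<theta>) / (cos \<theta> + (\<tau>\<beta> u / \<kappa>\<beta> u) * sin \<theta>)
    = \<tau> u / \<kappa> u"
proof -
  note rotation = bertrand_direction_curvature_torsion[OF assms]
  have \<kappa>\<beta>_pos: "\<kappa>\<beta> u > 0"
    using frenet_apparatusD(7)[OF direction_curve u] .
  have "- sin \<theta> * \<kappa>\<beta> u + \<tau>\<beta> u * cos \<theta> = \<tau> u"
    using sin_cos_squared_add[of \<theta>] unfolding rotation by algebra
  then have numerator: "- sin \<theta> + (\<tau>\<beta> u / \<kappa>\<beta> u) * cos \<theta> = \<tau> u / \<kappa>\<beta> u"
    using \<kappa>\<beta>_pos by (simp add: field_simps)
  have "cos \<theta> * \<kappa>\<beta> u + \<tau>\<beta> u * sin \<theta> = \<kappa> u"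
    using sin_cos_squared_add[of \<theta>] unfolding rotation by algebra
  then have denominator: "cos \<theta> + (\<tau>\<beta> u / \<kappa>\<beta> u) * sin \<theta> = \<kappa> u / \<kappa>\<beta> u"
    using \<kappa>\<beta>_pos by (simp add: field_simps)
  show ?thesis
    unfolding numerator denominator using \<kappa>\<beta>_pos by simp
qed

theorem corollary5p6:
  fixes I :: "real set"
    and \<alpha> T N B :: "real \<Rightarrow> real^3" and \<kappa> \<tau> :: "real \<Rightarrow> real"
    and sT :: "real \<Rightarrow> real"
    and \<alpha>T TT NT BT :: "real \<Rightarrow> real^3" and \<kappa>T \<tau>T :: "real \<Rightarrow> real"
    and \<beta> T\<beta> N\<beta> B\<beta> :: "real \<Rightarrow> real^3" and \<kappa>\<beta> \<tau>\<beta> :: "real \<Rightarrow> real"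
    and \<theta> :: real
  assumes alpha: "frenet_apparatus I \<alpha> T N B \<kappa> \<tau>"
    and smooth: "\<forall>s\<in>I. \<kappa> differentiable (at s) \<and> \<tau> differentiable (at s)"
    and arclen: "\<forall>s\<in>I. (sT has_real_derivative \<kappa> s) (at s)"
    and indicatrix: "\<forall>s\<in>I. \<alpha>T (sT s) = T s"
    and alphaT: "frenet_apparatus (sT ` I) \<alpha>T TT NT BT \<kappa>T \<tau>T"
    and beta: "frenet_apparatus (sT ` I) \<beta> T\<beta> N\<beta> B\<beta> \<kappa>\<beta> \<tau>\<beta>"
    and X: "\<forall>u\<in>sT ` I. T\<beta> u = cos \<theta> *\<^sub>R TT u + sin \<theta> *\<^sub>R BT u"
    and bertrand: "\<forall>u\<in>sT ` I. N\<beta> u = NT u"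
    and s: "s \<in> I"
  shows "(- sin \<theta> + (\<tau>\<beta> (sT s) / \<kappa>\<beta> (sT s)) * cos \<theta>)
           / (cos \<theta> + (\<tau>\<beta> (sT s) / \<kappa>\<beta> (sT s)) * sin \<theta>)
         = \<kappa> s ^ 2 / (\<kappa> s ^ 2 + \<tau> s ^ 2) powr (3/2) * deriv (\<lambda>r. \<tau> r / \<kappa> r) s"
proof -
  interpret tangent_indicatrix I \<alpha> T N B \<kappa> \<tau> sT \<alpha>T TT NT BT \<kappa>T \<tau>T
    using alpha arclen indicatrix alphaT by unfold_locales
  have "(- sin \<theta> + (\<tau>\<beta> (sT s) / \<kappa>\<beta> (sT s)) * cos \<theta>)
           / (cos \<theta> + (\<tau>\<beta> (sT s) / \<kappa>\<beta> (sT s)) * sin \<theta>) = \<tau>T (sT s) / \<kappa>T (sT s)"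
    using s by (intro bertrand_direction_torsion_ratio[OF alphaT beta X bertrand]) simp
  also have "\<dots> = \<kappa> s ^ 2 / (\<kappa> s ^ 2 + \<tau> s ^ 2) powr (3/2) * deriv (\<lambda>r. \<tau> r / \<kappa> r) s"
    using s smooth by (intro indicatrix_torsion_curvature_ratio) auto
  finally show ?thesis .
qed

end
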